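(* Let $\beta\in(-2,-1)$, $c\in(0,1)$, and let $n\geq 3$ be an integer with $n>\frac{\beta}{c-1}$. Let $x_{1,n}<x_{2,n}<\dots<x_{n,n}$ denote the zeros of the monic Meixner polynomial $M_n(x;\beta,c)$. Then $$0<x_{1,n}<-\beta-1<x_{2,n}<1<-\beta<2<x_{3,n}.$$
   Context: Monic Meixner polynomials are defined by $$M_n(x;\beta,c)=\left(\frac{c}{c-1}\right)^n(\beta)_n\sum_{k=0}^{n}\frac{(-n)_k(-x)_k(1-\frac1c)^k}{(\beta)_k\,k!},$$ for real $\beta,c$ with $c\neq 0$ and $\beta\notin\{-1,-2,\dots,-n+1\}$, where $(\alpha)_0=1$ and $(\alpha)_k=\alpha(\alpha+1)\cdots(\alpha+k-1)$ for $k\geq1$. It is known that for $\beta\in(-2,-1)$, $c\in(0,1)$, $n\ge3$ and $n>\frac{\beta}{c-1}$, all zeros of $M_n(x;\beta,c)$ are real, simple and positive. *)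

theory Defs
  imports Complex_Main
begin

definition meixner_M :: "nat \<Rightarrow> real \<Rightarrow> real \<Rightarrow> real \<Rightarrow> real" where
  "meixner_M n beta c x =
     (c / (c - 1)) ^ n * pochhammer beta n *
     (\<Sum>k\<le>n. pochhammer (- real n) k * pochhammer (- x) k * (1 - 1 / c) ^ k
              / (pochhammer beta k * fact k))"

end

(* Let F be the hypergeometric factor of M_n and rho(x) = (beta)_x c^x / x! the Meixner weight on the
   naturals; F is orthogonal with respect to rho to every polynomial of degree below n.  For
   -2 < beta < -1 the weight is negative only at x = 1.  If x_3 <= 2, then f(x) = x (x - 1) times the
   factors x - x_i for i >= 4 has degree n - 1, and F f is, up to a positive constant,
   x (x - 1) (x - x_1) (x - x_2) (x - x_3) times a square: so rho F f is nonnegative on the naturals,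
   positive beyond x_n, and yet sums to 0.  The two smallest zeros are located by sign changes:
   F(0) = 1, F(1) = 1 + n (1 - 1/c) / beta > 0 and F(-beta - 1) = (beta + n (1 - c)) / (beta c^n),
   which is negative exactly because n > beta / (c - 1). *)

theory Submission
  imports Defs "HOL-Analysis.Generalised_Binomial_Theorem" "HOL-Computational_Algebra.Polynomial"
begin

definition meixner_weight :: "real \<Rightarrow> real \<Rightarrow> nat \<Rightarrow> real" where
  "meixner_weight beta c x = pochhammer beta x * c ^ x / fact x"

lemma meixner_weight_sums:
  fixes c beta :: real
  assumes "\<bar>c\<bar> < 1"
  shows "meixner_weight beta c sums ((1 - c) powr (- beta))"
proof -
  have "(\<lambda>x. ((- beta) gchoose x) * (- c) ^ x) sums ((1 + (- c)) powr (- beta))"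
    by (rule gen_binomial_real) (use assms in simp)
  moreover have "((- beta) gchoose x) * (- c) ^ x = meixner_weight beta c x" for x
    by (simp add: meixner_weight_def gbinomial_pochhammer power_mult_distrib[symmetric])
  ultimately show ?thesis by (simp add: fun_eq_iff)
qed

lemma meixner_weight_falling_moment_sums:
  fixes c beta :: real
  assumes "\<bar>c\<bar> < 1"
  shows "(\<lambda>x. meixner_weight beta c x * pochhammer (- real x) k) sums
           ((-1) ^ k * c ^ k * pochhammer beta k * (1 - c) powr (- (beta + k)))"
proof -
  let ?f = "\<lambda>x. meixner_weight beta c x * pochhammer (- real x) k"
  have vanish: "?f x = 0" if "x < k" for x
    using that by (simp add: pochhammer_of_nat_eq_0_iff)
  have shift: "?f (x + k) = (-1) ^ k * c ^ k * pochhammer beta k * meixner_weight (beta + k) c x" for x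
  proof -
    have "fact (x + k) = (fact x * pochhammer (real x + 1) k :: real)"
      using pochhammer_product'[of 1 x k] by (simp add: pochhammer_fact add.commute)
    then have "pochhammer (- real (x + k)) k = (-1) ^ k * (fact (x + k) / fact x)"
      using pochhammer_minus[of "real (x + k)" k] by (simp add: add.commute)
    moreover have "pochhammer beta (x + k) = pochhammer beta k * pochhammer (beta + k) x"
      using pochhammer_product'[of beta k x] by (simp add: add.commute)
    ultimately show ?thesis by (simp add: meixner_weight_def power_add field_simps)
  qed
  have "(\<lambda>x. ?f (x + k)) sums ((-1) ^ k * c ^ k * pochhammer beta k * (1 - c) powr (- (beta + k)))"
    unfolding shift by (intro sums_mult meixner_weight_sums assms)
  then show ?thesis using sums_zero_iff_shift[of k ?f] vanish by blast
qed

lemma alternating_binomial_sum_Suc: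
  fixes f :: "nat \<Rightarrow> 'a :: comm_ring_1"
  shows "(\<Sum>k\<le>Suc m. (-1) ^ k * of_nat (Suc m choose k) * f k)
       = (\<Sum>k\<le>m. (-1) ^ k * of_nat (m choose k) * (f k - f (Suc k)))"
proof -
  have "(\<Sum>k\<le>Suc m. (-1) ^ k * of_nat (Suc m choose k) * f k)
      = f 0 + (\<Sum>k\<le>m. (-1) ^ Suc k * of_nat (m choose k) * f (Suc k))
            + (\<Sum>k\<le>m. (-1) ^ Suc k * of_nat (m choose Suc k) * f (Suc k))"
    by (simp only: sum.atMost_Suc_shift binomial_Suc_Suc of_nat_add distrib_left distrib_right
        sum.distrib add.assoc) simp
  also have "(\<Sum>k\<le>m. (-1) ^ Suc k * of_nat (m choose Suc k) * f (Suc k))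
           = (\<Sum>k\<le>m. (-1) ^ k * of_nat (m choose k) * f k) - f 0"
    using sum.atMost_Suc_shift[of "\<lambda>k. (-1) ^ k * of_nat (m choose k) * f k" m]
    by (simp add: sum_negf binomial_eq_0)
  finally show ?thesis
    by (simp add: sum_subtractf sum_negf right_diff_distrib)
qed

lemma alternating_binomial_sum_pochhammer:
  fixes g :: "'a :: comm_ring_1"
  assumes "j < n"
  shows "(\<Sum>k\<le>n. (-1) ^ k * of_nat (n choose k) * pochhammer (g + of_nat k) j) = 0"
  using assms
proof (induction n arbitrary: j g)
  case 0
  then show ?case by simp
next
  case (Suc m)
  show ?case
  proof (cases j)
    case 0
    then show ?thesis unfolding alternating_binomial_sum_Suc by simp
  next
    case (Suc i)
    have diff: "pochhammer (g + of_nat k) j - pochhammer (g + of_nat (Suc k)) j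
              = - of_nat j * pochhammer ((g + 1) + of_nat k) i" for k
    proof -
      have "pochhammer (g + of_nat (Suc k)) j
          = ((g + 1 + of_nat k) + of_nat i) * pochhammer (g + 1 + of_nat k) i"
        using pochhammer_rec'[of "g + 1 + of_nat k" i] by (simp add: Suc add_ac)
      moreover have "pochhammer (g + of_nat k) j = (g + of_nat k) * pochhammer (g + 1 + of_nat k) i"
        using pochhammer_rec[of "g + of_nat k" i] by (simp add: Suc add_ac)
      ultimately show ?thesis by (simp add: Suc algebra_simps)
    qed
    have "(\<Sum>k\<le>Suc m. (-1) ^ k * of_nat (Suc m choose k) * pochhammer (g + of_nat k) j)
        = - of_nat j * (\<Sum>k\<le>m. (-1) ^ k * of_nat (m choose k) * pochhammer ((g + 1) + of_nat k) i)"
      unfolding alternating_binomial_sum_Suc diff sum_distrib_left by (simp add: mult_ac)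
    also have "\<dots> = 0"
      using Suc.IH[of i "g + 1"] Suc.prems Suc by simp
    finally show ?thesis .
  qed
qed

definition meixner_coeff :: "nat \<Rightarrow> real \<Rightarrow> real \<Rightarrow> nat \<Rightarrow> real" where
  "meixner_coeff n beta c k = pochhammer (- real n) k * (1 - 1 / c) ^ k / (pochhammer beta k * fact k)"

text \<open>The hypergeometric factor \<open>\<^sub>2F\<^sub>1(-n, -x; \<beta>; 1 - 1/c)\<close> of \<open>M\<^sub>n\<close>.\<close>
definition meixner_F :: "nat \<Rightarrow> real \<Rightarrow> real \<Rightarrow> real \<Rightarrow> real" where
  "meixner_F n beta c x = (\<Sum>k\<le>n. meixner_coeff n beta c k * pochhammer (- x) k)"

lemma meixner_M_eq_F:
  "meixner_M n beta c x = (c / (c - 1)) ^ n * pochhammer beta n * meixner_F n beta c x"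
  unfolding meixner_M_def meixner_F_def meixner_coeff_def by (simp add: sum_distrib_left mult_ac)

lemma pochhammer_minus_of_nat_div_fact:
  "pochhammer (- of_nat n) k / fact k = (-1) ^ k * (of_nat (n choose k) :: 'a :: field_char_0)"
  by (simp add: binomial_gbinomial gbinomial_pochhammer)

text \<open>Expanding \<open>F\<close>, every term is a falling moment of a negative binomial weight; what
  remains is an \<open>n\<close>-th finite difference of a polynomial of degree \<open>j < n\<close>.\<close>
lemma meixner_F_orthogonal_pochhammer:
  fixes beta c :: real
  assumes c: "0 < c" "c < 1" and beta: "\<And>k. pochhammer beta k \<noteq> 0" and "j < n"
  shows "(\<lambda>x. meixner_weight beta c x * meixner_F n beta c x * pochhammer (x + beta) j) sums 0"
proof -
  let ?g = "beta + real j"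
  have weight_shift: "meixner_weight beta c x * pochhammer (x + beta) j
                    = pochhammer beta j * meixner_weight ?g c x" for x
    using pochhammer_product'[of beta x j] pochhammer_product'[of beta j x]
    by (simp add: meixner_weight_def add.commute)
  have expand: "meixner_weight beta c x * meixner_F n beta c x * pochhammer (x + beta) j
      = (\<Sum>k\<le>n. meixner_coeff n beta c k * pochhammer beta j *
          (meixner_weight ?g c x * pochhammer (- real x) k))" for x
  proof -
    have "meixner_weight beta c x * meixner_F n beta c x * pochhammer (x + beta) j
        = (meixner_weight beta c x * pochhammer (x + beta) j) * meixner_F n beta c x"
      by (simp only: mult_ac)
    then show ?thesis
      unfolding weight_shift meixner_F_def by (simp add: sum_distrib_left mult_ac)
  qed
  have coeff: "meixner_coeff n beta c k * pochhammer beta j *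
          ((-1) ^ k * c ^ k * pochhammer ?g k * (1 - c) powr (- (?g + k)))
        = (1 - c) powr (- ?g) * ((-1) ^ k * real (n choose k) * pochhammer (beta + real k) j)" for k
  proof -
    have "(1 - c) powr (- (?g + k)) = (1 - c) powr (- ?g) / (1 - c) ^ k"
      using c by (simp add: powr_diff powr_realpow diff_conv_add_uminus[symmetric] powr_add)
    moreover have "(1 - 1 / c) ^ k * ((-1) ^ k * c ^ k) = (1 - c) ^ k"
      using c by (simp add: power_mult_distrib[symmetric] field_simps)
    moreover have "pochhammer beta j * pochhammer ?g k = pochhammer beta k * pochhammer (beta + real k) j"
      using pochhammer_product'[of beta j k] pochhammer_product'[of beta k j] by (simp add: add.commute)
    moreover note pochhammer_minus_of_nat_div_fact[of n k, where 'a = real]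
    ultimately show ?thesis
      using c beta[of k] by (simp add: meixner_coeff_def field_simps)
  qed
  have "(\<lambda>x. \<Sum>k\<le>n. meixner_coeff n beta c k * pochhammer beta j *
          (meixner_weight ?g c x * pochhammer (- real x) k)) sums
        (\<Sum>k\<le>n. meixner_coeff n beta c k * pochhammer beta j *
          ((-1) ^ k * c ^ k * pochhammer ?g k * (1 - c) powr (- (?g + k))))"
    using c by (intro sums_sum sums_mult meixner_weight_falling_moment_sums) simp
  also have "(\<Sum>k\<le>n. meixner_coeff n beta c k * pochhammer beta j *
          ((-1) ^ k * c ^ k * pochhammer ?g k * (1 - c) powr (- (?g + k)))) = 0"
    unfolding coeff sum_distrib_left[symmetric]
    using alternating_binomial_sum_pochhammer[OF \<open>j < n\<close>, of beta] by simp
  finally show ?thesis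
    unfolding expand .
qed

definition pochhammer_span :: "real \<Rightarrow> nat \<Rightarrow> (real \<Rightarrow> real) \<Rightarrow> bool" where
  "pochhammer_span beta m f \<longleftrightarrow> (\<exists>d. \<forall>x. f x = (\<Sum>j<m. d j * pochhammer (x + beta) j))"

lemma pochhammer_span_scale:
  assumes "pochhammer_span beta m f"
  shows "pochhammer_span beta m (\<lambda>x. a * f x)"
proof -
  obtain d where "\<And>x. f x = (\<Sum>j<m. d j * pochhammer (x + beta) j)"
    using assms unfolding pochhammer_span_def by blast
  then have "a * f x = (\<Sum>j<m. (a * d j) * pochhammer (x + beta) j)" for x
    by (simp add: sum_distrib_left mult.assoc)
  then show ?thesis unfolding pochhammer_span_def by (intro exI[of _ "\<lambda>j. a * d j"]) simp
qed

lemma pochhammer_span_linear_mult: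
  assumes "pochhammer_span beta m f"
  shows "pochhammer_span beta (Suc m) (\<lambda>x. (x - r) * f x)"
proof -
  obtain d where d: "\<And>x. f x = (\<Sum>j<m. d j * pochhammer (x + beta) j)"
    using assms unfolding pochhammer_span_def by blast
  define d' where "d' j = (if j = 0 then 0 else d (j - 1))
                         - (if j < m then d j * (beta + real j + r) else 0)" for j
  have "(x - r) * f x = (\<Sum>j<Suc m. d' j * pochhammer (x + beta) j)" for x
  proof -
    have lin: "(x - r) * pochhammer (x + beta) j
        = pochhammer (x + beta) (Suc j) - (beta + real j + r) * pochhammer (x + beta) j" for j
      by (simp add: pochhammer_rec' algebra_simps)
    have "(x - r) * f x = (\<Sum>j<m. d j * ((x - r) * pochhammer (x + beta) j))"
      unfolding d sum_distrib_left by (simp add: mult_ac)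
    also have "\<dots> = (\<Sum>j<m. d j * pochhammer (x + beta) (Suc j))
                    - (\<Sum>j<m. d j * (beta + real j + r) * pochhammer (x + beta) j)"
      unfolding lin right_diff_distrib sum_subtractf by (simp add: mult.assoc)
    also have "(\<Sum>j<m. d j * pochhammer (x + beta) (Suc j))
             = (\<Sum>j<Suc m. (if j = 0 then 0 else d (j - 1)) * pochhammer (x + beta) j)"
      by (subst sum.lessThan_Suc_shift) simp
    also have "(\<Sum>j<m. d j * (beta + real j + r) * pochhammer (x + beta) j)
             = (\<Sum>j<Suc m. (if j < m then d j * (beta + real j + r) else 0) * pochhammer (x + beta) j)"
      by simp
    finally show ?thesis unfolding d'_def by (simp add: sum_subtractf left_diff_distrib)
  qed
  then show ?thesis unfolding pochhammer_span_def by blast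
qed

lemma pochhammer_span_prod:
  assumes "finite A"
  shows "pochhammer_span beta (Suc (card A)) (\<lambda>x. \<Prod>i\<in>A. (x - r i))"
  using assms
proof (induction A rule: finite_induct)
  case empty
  have "pochhammer_span beta 1 (\<lambda>x. 1)"
    unfolding pochhammer_span_def by (rule exI[of _ "\<lambda>_. 1"]) simp
  then show ?case by simp
next
  case (insert a A)
  then show ?case using pochhammer_span_linear_mult[OF insert.IH, of "r a"] by simp
qed

lemma meixner_F_orthogonal:
  fixes beta c :: real
  assumes "0 < c" "c < 1" and "\<And>k. pochhammer beta k \<noteq> 0"
    and "pochhammer_span beta m f" and "m \<le> n"
  shows "(\<lambda>x. meixner_weight beta c x * meixner_F n beta c x * f x) sums 0"
proof -
  obtain d where d: "\<And>x. f x = (\<Sum>j<m. d j * pochhammer (x + beta) j)"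
    using assms(4) unfolding pochhammer_span_def by blast
  have "(\<lambda>x. \<Sum>j<m. d j * (meixner_weight beta c x * meixner_F n beta c x * pochhammer (x + beta) j))
        sums (\<Sum>j<m. d j * 0)"
    using assms by (intro sums_sum sums_mult meixner_F_orthogonal_pochhammer) auto
  then show ?thesis unfolding d by (simp add: sum_distrib_left mult_ac)
qed

lemma meixner_weight_pos:
  fixes beta c :: real
  assumes "-2 < beta" "beta < -1" and "0 < c" and "2 \<le> x"
  shows "meixner_weight beta c x > 0"
proof -
  have "pochhammer beta x = pochhammer beta 2 * pochhammer (beta + 2) (x - 2)"
    using pochhammer_product[of 2 x beta] assms(4) by simp
  moreover have "pochhammer beta 2 > 0"
    using assms by (simp add: numeral_2_eq_2 pochhammer_rec' mult_neg_neg)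
  moreover have "pochhammer (beta + 2) (x - 2) > 0"
    using assms by (intro pochhammer_pos) simp
  ultimately show ?thesis using assms by (simp add: meixner_weight_def)
qed

lemma meixner_F_nonneg_product_vanishes:
  fixes beta c :: real and x :: nat
  assumes beta: "-2 < beta" "beta < -1" and c: "0 < c" "c < 1"
    and f: "pochhammer_span beta n f" "f 0 = 0" "f 1 = 0"
    and nonneg: "\<And>x::nat. 2 \<le> x \<Longrightarrow> 0 \<le> meixner_F n beta c x * f x"
    and x: "2 \<le> x"
  shows "meixner_F n beta c x * f x = 0"
proof -
  define h where "h = (\<lambda>x::nat. meixner_weight beta c x * (meixner_F n beta c x * f x))"
  have "\<And>k. pochhammer beta k \<noteq> 0"
    using beta by (auto simp: pochhammer_eq_0_iff)
  then have "h sums 0"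
    using meixner_F_orthogonal[OF c _ f(1) order.refl] by (simp add: h_def mult.assoc)
  moreover have "h x \<ge> 0" for x
  proof (cases "2 \<le> x")
    case True
    then show ?thesis
      unfolding h_def using meixner_weight_pos[OF beta c(1) True] nonneg by simp
  next
    case False
    then have "x = 0 \<or> x = 1" by auto
    then show ?thesis unfolding h_def using f by auto
  qed
  ultimately have "h x = 0"
    using suminf_eq_zero_iff[of h] by (auto simp: sums_iff)
  then show ?thesis
    unfolding h_def using meixner_weight_pos[OF beta c(1) x] by simp
qed

lemma poly_eq_coeff_prod_roots:
  fixes p :: "'a :: idom poly"
  assumes "finite A" and deg: "degree p \<le> card A" and inj: "inj_on r A"
    and roots: "\<And>i. i \<in> A \<Longrightarrow> poly p (r i) = 0"
  shows "poly p x = coeff p (card A) * (\<Prod>i\<in>A. (x - r i))"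
proof -
  define R where "R = (\<Prod>i\<in>A. [:- r i, 1:])"
  have degR: "degree R = card A"
    unfolding R_def by (subst degree_prod_eq_sum_degree) auto
  have lcR: "lead_coeff R = 1"
    unfolding R_def by (simp add: lead_coeff_prod)
  define Q where "Q = p - smult (coeff p (card A)) R"
  have "Q = 0"
  proof (rule ccontr)
    assume "Q \<noteq> 0"
    have "degree Q \<le> card A"
      unfolding Q_def using deg degR by (intro degree_diff_le) auto
    moreover have "coeff Q (card A) = 0"
      unfolding Q_def using lcR degR by simp
    ultimately have "degree Q < card A"
      using \<open>Q \<noteq> 0\<close> by (metis le_neq_implies_less leading_coeff_0_iff)
    have "poly R (r i) = 0" if "i \<in> A" for i
      unfolding R_def poly_prod using that \<open>finite A\<close> by (auto intro: prod_zero)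
    then have "r ` A \<subseteq> {x. poly Q x = 0}"
      using roots unfolding Q_def by auto
    then have "card (r ` A) \<le> degree Q"
      using card_mono[OF poly_roots_finite[OF \<open>Q \<noteq> 0\<close>]] card_poly_roots_bound[OF \<open>Q \<noteq> 0\<close>]
      by (meson order.trans)
    with \<open>degree Q < card A\<close> card_image[OF inj] show False by simp
  qed
  then have "poly p x = coeff p (card A) * poly R x"
    unfolding Q_def by (metis eq_iff_diff_eq_0 poly_smult)
  then show ?thesis
    unfolding R_def by (simp add: poly_prod)
qed

definition meixner_poly :: "nat \<Rightarrow> real \<Rightarrow> real \<Rightarrow> real poly" where
  "meixner_poly n beta c = (\<Sum>k\<le>n. smult (meixner_coeff n beta c k) (\<Prod>i<k. [:of_nat i, -1:]))"

lemma poly_meixner_poly: "poly (meixner_poly n beta c) x = meixner_F n beta c x"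
  unfolding meixner_poly_def meixner_F_def
  by (simp add: poly_sum poly_prod pochhammer_prod lessThan_atLeast0)

lemma degree_meixner_poly_le: "degree (meixner_poly n beta c) \<le> n"
  unfolding meixner_poly_def
proof (rule degree_sum_le)
  fix k assume "k \<in> {..n}"
  have "degree (\<Prod>i<k. [:of_nat i, -1::real:]) \<le> (\<Sum>i<k. degree [:of_nat i, -1::real:])"
    using degree_prod_sum_le[of "{..<k}" "\<lambda>i. [:of_nat i, -1::real:]"] by (simp add: o_def)
  also have "\<dots> \<le> k" by simp
  finally show "degree (smult (meixner_coeff n beta c k) (\<Prod>i<k. [:of_nat i, -1:])) \<le> n"
    using \<open>k \<in> {..n}\<close> degree_smult_le order.trans by fastforce
qed simp

lemma continuous_on_meixner_F: "continuous_on A (meixner_F n beta c)"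
  using continuous_on_poly[OF continuous_on_id, of A "meixner_poly n beta c"]
  by (simp add: poly_meixner_poly)

lemma meixner_F_at_0: "meixner_F n beta c 0 = 1"
proof -
  have "meixner_F n beta c 0 = (\<Sum>k\<in>{0}. meixner_coeff n beta c k * pochhammer (- 0) k)"
    unfolding meixner_F_def by (rule sum.mono_neutral_right) (auto simp: pochhammer_0_left)
  then show ?thesis by (simp add: meixner_coeff_def)
qed

lemma meixner_F_at_1:
  assumes "1 \<le> n"
  shows "meixner_F n beta c 1 = 1 + real n * (1 - 1 / c) / beta"
proof -
  have "meixner_F n beta c 1 = (\<Sum>k\<in>{0,1}. meixner_coeff n beta c k * pochhammer (- 1) k)"
    unfolding meixner_F_def using assms
    by (intro sum.mono_neutral_right) (auto simp: pochhammer_of_nat_eq_0_iff[of 1, simplified])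
  then show ?thesis by (simp add: meixner_coeff_def)
qed

lemma sum_of_nat_mult_binomial_power:
  fixes u :: "'a :: comm_ring_1"
  shows "(\<Sum>k\<le>n. of_nat k * of_nat (n choose k) * u ^ k) = of_nat n * u * (1 + u) ^ (n - 1)"
proof (cases n)
  case 0
  then show ?thesis by simp
next
  case (Suc m)
  have "(\<Sum>k\<le>Suc m. of_nat k * of_nat (Suc m choose k) * u ^ k)
      = (\<Sum>k\<le>m. of_nat (Suc k) * of_nat (Suc m choose Suc k) * u ^ Suc k)"
    by (subst sum.atMost_Suc_shift) simp
  also have "\<dots> = (\<Sum>k\<le>m. of_nat (Suc m) * u * (of_nat (m choose k) * u ^ k * 1 ^ (m - k)))"
  proof (rule sum.cong)
    fix k
    have "of_nat (Suc k) * of_nat (Suc m choose Suc k) = (of_nat (Suc m) * of_nat (m choose k) :: 'a)"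
      using Suc_times_binomial_eq[of m k] by (metis mult.commute of_nat_mult)
    then show "of_nat (Suc k) * of_nat (Suc m choose Suc k) * u ^ Suc k
             = of_nat (Suc m) * u * (of_nat (m choose k) * u ^ k * 1 ^ (m - k))"
      by (simp add: mult_ac)
  qed simp
  also have "\<dots> = of_nat (Suc m) * u * (u + 1) ^ m"
    by (simp add: binomial_ring[of u 1 m] sum_distrib_left)
  finally show ?thesis using Suc by (simp add: add.commute)
qed

lemma meixner_F_at_minus_beta_minus_1:
  fixes beta c :: real
  assumes beta: "\<And>k. pochhammer beta k \<noteq> 0" and "c \<noteq> 0"
  shows "meixner_F n beta c (- beta - 1) = (beta + real n * (1 - c)) / (beta * c ^ n)"
proof -
  define u where "u = 1 / c - 1"
  have "beta \<noteq> 0" using beta[of 1] by simp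
  have summand: "meixner_coeff n beta c k * pochhammer (- (- beta - 1)) k
            = real (n choose k) * u ^ k + real k * real (n choose k) * u ^ k / beta" for k
  proof -
    have shift: "pochhammer (beta + 1) k * beta = pochhammer beta k * (beta + real k)"
      using pochhammer_rec[of beta k] pochhammer_rec'[of beta k] by (simp add: mult_ac)
    have sign: "(1 - 1 / c) ^ k * (-1) ^ k = u ^ k"
      unfolding u_def power_mult_distrib[symmetric] by simp
    have "meixner_coeff n beta c k * pochhammer (- (- beta - 1)) k
        = (pochhammer (- real n) k / fact k) * (1 - 1 / c) ^ k
          * (pochhammer (beta + 1) k * beta) / (pochhammer beta k * beta)"
      using beta[of k] \<open>beta \<noteq> 0\<close> by (simp add: meixner_coeff_def field_simps)
    also have "\<dots> = real (n choose k) * u ^ k * (beta + real k) / beta"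
      unfolding pochhammer_minus_of_nat_div_fact shift using beta[of k] \<open>beta \<noteq> 0\<close> sign
      by (simp add: field_simps)
    finally show ?thesis
      using \<open>beta \<noteq> 0\<close> by (simp add: field_simps)
  qed
  have "meixner_F n beta c (- beta - 1)
      = (\<Sum>k\<le>n. real (n choose k) * u ^ k) + (\<Sum>k\<le>n. real k * real (n choose k) * u ^ k) / beta"
    unfolding meixner_F_def summand by (simp add: sum.distrib sum_divide_distrib)
  also have "\<dots> = (1 + u) ^ n + real n * u * (1 + u) ^ (n - 1) / beta"
    unfolding sum_of_nat_mult_binomial_power using binomial_ring[of u 1 n] by (simp add: add.commute)
  also have "\<dots> = (beta + real n * (1 - c)) / (beta * c ^ n)"
    using \<open>c \<noteq> 0\<close> \<open>beta \<noteq> 0\<close> unfolding u_def by (cases n) (auto simp: field_simps)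
  finally show ?thesis .
qed

lemma meixner_F_eq_prod_zeros:
  assumes "strict_mono_on {1..n} xs" and "{x. meixner_F n beta c x = 0} = xs ` {1..n}"
  obtains C where "C \<noteq> 0" and "\<And>x. meixner_F n beta c x = C * (\<Prod>i\<in>{1..n}. (x - xs i))"
proof -
  have "poly (meixner_poly n beta c) (xs i) = 0" if "i \<in> {1..n}" for i
    using assms(2) that by (auto simp: poly_meixner_poly)
  then have "meixner_F n beta c x = coeff (meixner_poly n beta c) n * (\<Prod>i\<in>{1..n}. (x - xs i))" for x
    using poly_eq_coeff_prod_roots[of "{1..n}" "meixner_poly n beta c" xs x]
      degree_meixner_poly_le strict_mono_on_imp_inj_on[OF assms(1)]
    by (simp add: poly_meixner_poly)
  moreover from this[of 0] have "coeff (meixner_poly n beta c) n \<noteq> 0"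
    by (auto simp: meixner_F_at_0)
  ultimately show ?thesis using that by blast
qed

lemma meixner_third_zero_gt_2:
  fixes beta c C :: real
  assumes beta: "-2 < beta" "beta < -1" and c: "0 < c" "c < 1" and "3 \<le> n"
    and mono: "strict_mono_on {1..n} xs"
    and "C \<noteq> 0" and F: "\<And>x. meixner_F n beta c x = C * (\<Prod>i\<in>{1..n}. (x - xs i))"
  shows "2 < xs 3"
proof (rule ccontr)
  assume "\<not> 2 < xs 3"
  define f where "f x = C * ((x - 0) * ((x - 1) * (\<Prod>i\<in>{4..n}. (x - xs i))))" for x
  have "pochhammer_span beta (Suc (card {4..n})) (\<lambda>x. \<Prod>i\<in>{4..n}. (x - xs i))"
    by (rule pochhammer_span_prod) simp
  then have "pochhammer_span beta (Suc (Suc (Suc (card {4..n})))) f"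
    unfolding f_def by (intro pochhammer_span_scale pochhammer_span_linear_mult)
  moreover have "Suc (Suc (Suc (card {4..n}))) = n" using \<open>3 \<le> n\<close> by simp
  ultimately have span: "pochhammer_span beta n f" by simp
  have "{1..n} = {1..3} \<union> {4..n}" using \<open>3 \<le> n\<close> by auto
  then have F_times_f: "meixner_F n beta c x * f x
      = C\<^sup>2 * (x * (x - 1) * (\<Prod>i\<in>{1..3}. (x - xs i)) * (\<Prod>i\<in>{4..n}. (x - xs i))\<^sup>2)" for x
    unfolding F f_def by (simp add: prod.union_disjoint power2_eq_square mult_ac)
  have below: "xs i \<le> xs 3" if "i \<in> {1..3}" for i
    using that \<open>3 \<le> n\<close> strict_mono_on_leD[OF mono] by auto
  have nonneg: "0 \<le> meixner_F n beta c x * f x" if "2 \<le> x" for x :: nat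
  proof -
    have "0 \<le> (\<Prod>i\<in>{1..3}. (real x - xs i))"
      using below \<open>\<not> 2 < xs 3\<close> that by (intro prod_nonneg) force
    then show ?thesis unfolding F_times_f using that by simp
  qed
  define x0 where "x0 = nat \<lceil>xs n\<rceil> + 2"
  have beyond: "xs i < real x0" if "i \<in> {1..n}" for i
  proof -
    have "xs i \<le> xs n" using strict_mono_on_leD[OF mono that, of n] that by simp
    then show ?thesis unfolding x0_def by linarith
  qed
  have "0 < (\<Prod>i\<in>{1..3}. (real x0 - xs i))" "0 < (\<Prod>i\<in>{4..n}. (real x0 - xs i))"
    using beyond \<open>3 \<le> n\<close> by (auto intro!: prod_pos)
  moreover have "1 < real x0" by (simp add: x0_def)
  moreover have "\<forall>i\<in>{4..n}. real x0 \<noteq> xs i"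
    using beyond by (metis atLeastAtMost_iff le_trans less_irrefl one_le_numeral)
  ultimately have "0 < meixner_F n beta c x0 * f x0"
    unfolding F_times_f using \<open>C \<noteq> 0\<close> by (simp add: zero_less_mult_iff)
  moreover have "meixner_F n beta c x0 * f x0 = 0"
    by (rule meixner_F_nonneg_product_vanishes[OF beta c span _ _ nonneg]) (auto simp: f_def x0_def)
  ultimately show False by simp
qed

lemma meixner_F_zeros_below_1:
  fixes beta c :: real
  assumes beta: "-2 < beta" "beta < -1" and c: "0 < c" "c < 1" and "1 \<le> n"
    and large: "real n > beta / (c - 1)"
  obtains z1 z2 where "0 < z1" "z1 < - beta - 1" "meixner_F n beta c z1 = 0"
    and "- beta - 1 < z2" "z2 < 1" "meixner_F n beta c z2 = 0"
proof -
  let ?F = "meixner_F n beta c"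
  have "\<And>k. pochhammer beta k \<noteq> 0"
    using beta by (auto simp: pochhammer_eq_0_iff)
  moreover have "beta + real n * (1 - c) > 0"
    using large c by (simp add: divide_less_eq algebra_simps)
  moreover have "beta * c ^ n < 0"
    using beta c by (simp add: mult_neg_pos)
  ultimately have neg: "?F (- beta - 1) < 0"
    using c by (simp add: meixner_F_at_minus_beta_minus_1 divide_pos_neg)
  have pos0: "?F 0 > 0" by (simp add: meixner_F_at_0)
  have "1 - 1 / c < 0" using c by simp
  then have "real n * (1 - 1 / c) < 0" using \<open>1 \<le> n\<close> by (simp add: mult_pos_neg)
  then have "0 < real n * (1 - 1 / c) / beta"
    using beta by (intro divide_neg_neg) auto
  then have pos1: "?F 1 > 0"
    using \<open>1 \<le> n\<close> by (simp add: meixner_F_at_1)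
  obtain z1 where z1: "0 \<le> z1" "z1 \<le> - beta - 1" "?F z1 = 0"
    using IVT2'[of ?F "- beta - 1" 0 0] neg pos0 beta continuous_on_meixner_F by auto
  moreover obtain z2 where z2: "- beta - 1 \<le> z2" "z2 \<le> 1" "?F z2 = 0"
    using IVT'[of ?F "- beta - 1" 0 1] neg pos1 beta continuous_on_meixner_F by auto
  moreover have "0 < z1" "z1 < - beta - 1" "- beta - 1 < z2" "z2 < 1"
    using z1 z2 pos0 pos1 neg by (auto simp: order.order_iff_strict)
  ultimately show ?thesis
    using that by blast
qed

theorem lemma4p3:
  fixes beta c :: real and n :: nat and xs :: "nat \<Rightarrow> real"
  assumes "-2 < beta" "beta < -1"
    and "0 < c" "c < 1"
    and "n \<ge> 3"
    and "real n > beta / (c - 1)"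
    and "strict_mono_on {1..n} xs"
    and "{x. meixner_M n beta c x = 0} = xs ` {1..n}"
  shows "0 < xs 1 \<and> xs 1 < -beta - 1 \<and> -beta - 1 < xs 2 \<and> xs 2 < 1
         \<and> 1 < -beta \<and> -beta < 2 \<and> 2 < xs 3"
proof -
  have "pochhammer beta n \<noteq> 0"
    using assms(1,2) by (auto simp: pochhammer_eq_0_iff)
  then have zeros: "{x. meixner_F n beta c x = 0} = xs ` {1..n}"
    using assms(3,4,8) by (simp add: meixner_M_eq_F)
  obtain C where "C \<noteq> 0" "\<And>x. meixner_F n beta c x = C * (\<Prod>i\<in>{1..n}. (x - xs i))"
    using meixner_F_eq_prod_zeros[OF assms(7) zeros] by blast
  then have x3: "2 < xs 3"
    by (rule meixner_third_zero_gt_2[OF assms(1-5,7)])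
  have "1 \<le> n" using assms(5) by simp
  then obtain z1 z2 where z1: "0 < z1" "z1 < - beta - 1" "meixner_F n beta c z1 = 0"
    and z2: "- beta - 1 < z2" "z2 < 1" "meixner_F n beta c z2 = 0"
    by (rule meixner_F_zeros_below_1[OF assms(1-4) _ assms(6)])
  then obtain i1 i2 where i: "i1 \<in> {1..n}" "z1 = xs i1" "i2 \<in> {1..n}" "z2 = xs i2"
    using zeros by blast
  have "3 \<in> {1..n}" using assms(5) by simp
  have "i1 < i2"
    using strict_mono_on_less[OF assms(7) i(1) i(3)] i z1 z2 by simp
  moreover have "i2 < 3"
    using strict_mono_on_less[OF assms(7) i(3) \<open>3 \<in> {1..n}\<close>] i z2 x3 by simp
  ultimately have "i1 = 1" "i2 = 2" using i by auto
  then show ?thesis using i z1 z2 x3 assms(1,2) by simp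
qed

end
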